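(* Let $\widehat q\in L_2(0,\pi)$ be real valued and such that $0$ is an eigenvalue of the problem $-y''+\widehat q(x)y=\lambda y$, $y(0)=y'(\pi)=0$. Let $\widehat S(\rho,x)$ be the solution of $-y''+\widehat qy=\rho^2y$ with $\widehat S(\rho,0)=0$, $\widehat S'(\rho,0)=1$, let $\widehat s_0(x)=3(\widehat S(0,x)/x-1)$ and $\widehat\sigma_0(x)=\widehat s_0(x)/x+\widehat s_0'(x)-\frac32\int_0^x\widehat q(t)\,dt$ (the first NSBF coefficients of $\widehat S$ and $\widehat S'$), and let $\widehat\omega=\frac12\int_0^\pi\widehat q(t)\,dt$. Then $$\widehat\omega=-\frac{\widehat\sigma_0(\pi)}{3}-\frac1\pi.$$ Consequently, for every eigenvalue $\widehat\rho_k^2$ ($\widehat\rho_k>0$) of this problem, the NSBF coefficients $\widehat\sigma_n(\pi)$ of $\widehat S'(\rho,\pi)$ satisfy $$\left(\mathbf j_1(\widehat\rho_k\pi)-\frac{\sin(\widehat\rho_k\pi)}3\right)\widehat\sigma_0(\pi)+\sum_{n=1}^\infty(-1)^n\widehat\sigma_n(\pi)\mathbf j_{2n+1}(\widehat\rho_k\pi)=-\widehat\rho_k\cos(\widehat\rho_k\pi)+\frac{\sin(\widehat\rho_k\pi)}{\pi}.$$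
   Context: $\mathbf j_k$ denotes the spherical Bessel function of the first kind of order $k$. For real $\widehat q\in L_2(0,\pi)$ it is known that $\widehat S'(\rho,x)=\cos(\rho x)+\frac1{2\rho}\left(\int_0^x\widehat q(t)dt\right)\sin(\rho x)+\frac1\rho\sum_{n=0}^\infty(-1)^n\widehat\sigma_n(x)\mathbf j_{2n+1}(\rho x)$ (NSBF representation), with $\rho$-independent coefficients $\widehat\sigma_n(x)$ and $\widehat\sigma_0$ as given, convergent for all $\rho\in\mathbb C$. *)

theory Defs
  imports "HOL-Analysis.Analysis"
begin

definition sph_bessel_j :: "nat \<Rightarrow> complex \<Rightarrow> complex" where
  "sph_bessel_j n z =
     (\<Sum>m. (-1)^m * 2^n * fact (m+n) / (fact m * fact (2*m+2*n+1)) * z^(2*m+n))"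

text \<open>y solves -y'' + q y = lam y on [0,pi] in the Caratheodory sense:
  y is differentiable on [0,pi] with derivative y', and y' is absolutely continuous
  with y'' = (q - lam) y a.e., written in integrated form.\<close>
definition sl_solution ::
  "(real \<Rightarrow> real) \<Rightarrow> complex \<Rightarrow> (real \<Rightarrow> complex) \<Rightarrow> (real \<Rightarrow> complex) \<Rightarrow> bool" where
  "sl_solution q lam y y' \<longleftrightarrow>
     (\<forall>x\<in>{0..pi}. (y has_vector_derivative y' x) (at x within {0..pi}) \<and>
        ((\<lambda>t. (complex_of_real (q t) - lam) * y t) has_integral (y' x - y' 0)) {0..x})"

definition is_eigenvalue :: "(real \<Rightarrow> real) \<Rightarrow> complex \<Rightarrow> bool" where
  "is_eigenvalue q lam \<longleftrightarrow>
     (\<exists>y y'. sl_solution q lam y y' \<and> y 0 = 0 \<and> y' pi = 0 \<and> (\<exists>x\<in>{0..pi}. y x \<noteq> 0))"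

end

theory Submission
  imports Defs
begin

(* If lambda = rho^2 is an eigenvalue, the normalized solution S(rho,.) is a multiple of the
   eigenfunction, since the initial value problem with zero data has only the zero solution;
   hence S'(rho,pi) = 0.  Uniqueness holds because on any interval [a,b] with z(a) = w(a) = 0
   and integral of 1 + |q| + |lambda| at most 1/2, the function |z| + |w| is bounded by half
   its own maximum; finitely many such intervals cover [0,pi].

   For rho = 0, differentiating s_0 gives sigma_0(x) = 3 (S'(0,x) - 1) / x - 3/2 int_0^x q, so
   S'(0,pi) = 0 yields omega = - sigma_0(pi) / 3 - 1 / pi.  For rho = rho_k, the NSBF expansion
   of S'(rho_k,pi) = 0, with its n = 0 term split off and omega eliminated, is the stated
   identity. *)

lemma sl_solution_diff:
  assumes "sl_solution q lam y y'" and "sl_solution q lam z z'"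
  shows "sl_solution q lam (\<lambda>x. y x - c * z x) (\<lambda>x. y' x - c * z' x)"
  unfolding sl_solution_def
proof
  fix x assume x: "x \<in> {0..pi}"
  have dy: "(y has_vector_derivative y' x) (at x within {0..pi})"
    and iy: "((\<lambda>t. (complex_of_real (q t) - lam) * y t) has_integral (y' x - y' 0)) {0..x}"
    and dz: "(z has_vector_derivative z' x) (at x within {0..pi})"
    and iz: "((\<lambda>t. (complex_of_real (q t) - lam) * z t) has_integral (z' x - z' 0)) {0..x}"
    using assms x unfolding sl_solution_def by auto
  have "((\<lambda>t. (complex_of_real (q t) - lam) * y t - c * ((complex_of_real (q t) - lam) * z t))
      has_integral ((y' x - y' 0) - c * (z' x - z' 0))) {0..x}"
    by (intro has_integral_diff iy has_integral_mult_right iz)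
  then have "((\<lambda>t. (complex_of_real (q t) - lam) * (y t - c * z t)) has_integral
      (y' x - c * z' x - (y' 0 - c * z' 0))) {0..x}"
    by (simp add: algebra_simps)
  moreover have "((\<lambda>x. y x - c * z x) has_vector_derivative y' x - c * z' x) (at x within {0..pi})"
    by (intro has_vector_derivative_diff dy has_vector_derivative_mult_right dz)
  ultimately show "((\<lambda>x. y x - c * z x) has_vector_derivative y' x - c * z' x) (at x within {0..pi}) \<and>
      ((\<lambda>t. (complex_of_real (q t) - lam) * (y t - c * z t)) has_integral
        (y' x - c * z' x - (y' 0 - c * z' 0))) {0..x}" by blast
qed

lemma sl_solution_has_integral_between:
  assumes sol: "sl_solution q lam z w" and "0 \<le> a" "a \<le> x" "x \<le> pi"
  shows "(w has_integral (z x - z a)) {a..x}"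
    and "((\<lambda>t. (complex_of_real (q t) - lam) * z t) has_integral (w x - w a)) {a..x}"
proof -
  let ?f = "\<lambda>t. (complex_of_real (q t) - lam) * z t"
  have "(z has_vector_derivative w t) (at t within {a..x})" if "t \<in> {a..x}" for t
  proof (rule has_vector_derivative_within_subset)
    show "(z has_vector_derivative w t) (at t within {0..pi})"
      using sol that assms(2-4) unfolding sl_solution_def by auto
  qed (use assms(2-4) in auto)
  then show "(w has_integral (z x - z a)) {a..x}"
    by (rule fundamental_theorem_of_calculus[OF assms(3)])
  have i0x: "(?f has_integral (w x - w 0)) {0..x}" and i0a: "(?f has_integral (w a - w 0)) {0..a}"
    using sol assms(2-4) unfolding sl_solution_def by auto
  have "?f integrable_on {a..x}"
    using integrable_subinterval_real[OF has_integral_integrable[OF i0x]] assms(2) by simp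
  then obtain j where iax: "(?f has_integral j) {a..x}" by blast
  have "(?f has_integral (w a - w 0) + j) {0..x}"
    by (rule has_integral_combine[OF assms(2,3) i0a iax])
  then have "j = w x - w a"
    using has_integral_unique[OF i0x] by (simp add: algebra_simps)
  then show "(?f has_integral (w x - w a)) {a..x}" using iax by simp
qed

lemma sl_solution_continuous:
  assumes sol: "sl_solution q lam z w"
  shows "continuous_on {0..pi} z" and "continuous_on {0..pi} w"
proof -
  show "continuous_on {0..pi} z"
    using sol unfolding sl_solution_def by (intro continuous_on_vector_derivative) auto
  let ?f = "\<lambda>t. (complex_of_real (q t) - lam) * z t"
  have "(?f has_integral (w pi - w 0)) {0..pi}" using sol unfolding sl_solution_def by auto
  then have "continuous_on {0..pi} (\<lambda>x. w 0 + integral {0..x} ?f)"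
    by (intro continuous_intros indefinite_integral_continuous_1 has_integral_integrable)
  moreover have "w 0 + integral {0..x} ?f = w x" if "x \<in> {0..pi}" for x
  proof -
    have "(?f has_integral (w x - w 0)) {0..x}" using sol that unfolding sl_solution_def by auto
    then show ?thesis by (simp add: integral_unique)
  qed
  ultimately show "continuous_on {0..pi} w" by (rule continuous_on_eq)
qed

lemma sl_solution_norm_le_integral:
  assumes sol: "sl_solution q lam z w" and qi: "(\<lambda>t. \<bar>q t\<bar>) integrable_on {0..pi}"
    and ax: "0 \<le> a" "a \<le> x" "x \<le> pi" and za: "z a = 0" and wa: "w a = 0"
    and bound: "\<And>t. t \<in> {a..x} \<Longrightarrow> norm (z t) + norm (w t) \<le> M"
  shows "norm (z x) + norm (w x) \<le> M * integral {a..x} (\<lambda>t. 1 + \<bar>q t\<bar> + norm lam)"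
proof -
  let ?f = "\<lambda>t. (complex_of_real (q t) - lam) * z t"
  have qi_ax: "(\<lambda>t. \<bar>q t\<bar>) integrable_on {a..x}"
    using integrable_subinterval_real[OF qi] ax by simp
  have g_int: "(\<lambda>t. M * (\<bar>q t\<bar> + norm lam)) integrable_on {a..x}"
    by (intro integrable_on_mult_right integrable_add qi_ax integrable_const_ivl)
  have w_int: "(w has_integral z x) {a..x}" and f_int: "(?f has_integral w x) {a..x}"
    using sl_solution_has_integral_between[OF sol ax] za wa by simp_all
  have "norm (z x) \<le> integral {a..x} (\<lambda>t. M)"
  proof -
    have "norm (w t) \<le> M" if "t \<in> {a..x}" for t
      using bound[OF that] norm_ge_zero[of "z t"] by linarith
    then show ?thesis
      using integral_norm_bound_integral[OF has_integral_integrable[OF w_int] integrable_const_ivl]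
        integral_unique[OF w_int] by metis
  qed
  moreover have "norm (w x) \<le> integral {a..x} (\<lambda>t. M * (\<bar>q t\<bar> + norm lam))"
  proof -
    have "norm (?f t) \<le> M * (\<bar>q t\<bar> + norm lam)" if "t \<in> {a..x}" for t
    proof -
      have "norm (z t) \<le> M" using bound[OF that] norm_ge_zero[of "w t"] by linarith
      moreover have "norm (complex_of_real (q t) - lam) \<le> \<bar>q t\<bar> + norm lam"
        using norm_triangle_ineq4[of "complex_of_real (q t)" lam] by simp
      ultimately have "norm (complex_of_real (q t) - lam) * norm (z t) \<le> (\<bar>q t\<bar> + norm lam) * M"
        by (intro mult_mono) auto
      then show ?thesis by (simp add: norm_mult mult.commute)
    qed
    then have "norm (integral {a..x} ?f) \<le> integral {a..x} (\<lambda>t. M * (\<bar>q t\<bar> + norm lam))"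
      by (intro integral_norm_bound_integral has_integral_integrable[OF f_int] g_int)
    then show ?thesis using integral_unique[OF f_int] by simp
  qed
  moreover have "integral {a..x} (\<lambda>t. M) + integral {a..x} (\<lambda>t. M * (\<bar>q t\<bar> + norm lam))
      = M * integral {a..x} (\<lambda>t. 1 + \<bar>q t\<bar> + norm lam)"
  proof -
    have "integral {a..x} (\<lambda>t. M) + integral {a..x} (\<lambda>t. M * (\<bar>q t\<bar> + norm lam))
        = integral {a..x} (\<lambda>t. M + M * (\<bar>q t\<bar> + norm lam))"
      by (rule integral_add[symmetric]) (simp_all add: g_int integrable_const_ivl)
    also have "\<dots> = integral {a..x} (\<lambda>t. M * (1 + \<bar>q t\<bar> + norm lam))"
      by (simp add: algebra_simps)
    finally show ?thesis by simp
  qed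
  ultimately show ?thesis by linarith
qed

lemma sl_solution_zero_propagates:
  assumes sol: "sl_solution q lam z w" and qi: "(\<lambda>t. \<bar>q t\<bar>) integrable_on {0..pi}"
    and ab: "0 \<le> a" "a \<le> b" "b \<le> pi" and za: "z a = 0" and wa: "w a = 0"
    and small: "integral {a..b} (\<lambda>t. 1 + \<bar>q t\<bar> + norm lam) \<le> 1/2"
    and t: "t \<in> {a..b}"
  shows "z t = 0 \<and> w t = 0"
proof -
  let ?k = "\<lambda>t. 1 + \<bar>q t\<bar> + norm lam"
  define u where "u t = norm (z t) + norm (w t)" for t
  have u_cont: "continuous_on {a..b} u"
    unfolding u_def using ab
    by (intro continuous_intros continuous_on_subset[OF sl_solution_continuous(1)[OF sol]]
        continuous_on_subset[OF sl_solution_continuous(2)[OF sol]]) auto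
  then obtain t0 where t0: "t0 \<in> {a..b}" and max: "\<And>t. t \<in> {a..b} \<Longrightarrow> u t \<le> u t0"
    using continuous_attains_sup[OF compact_Icc _ u_cont] ab by auto
  have "(\<lambda>t. \<bar>q t\<bar>) integrable_on {a..b}"
    using integrable_subinterval_real[OF qi] ab by simp
  then have k_int: "?k integrable_on {a..b}"
    by (intro integrable_add integrable_const_ivl)
  have "u t0 \<le> u t0 * integral {a..t0} ?k"
    unfolding u_def
  proof (rule sl_solution_norm_le_integral[OF sol qi _ _ _ za wa])
    show "norm (z t) + norm (w t) \<le> norm (z t0) + norm (w t0)" if "t \<in> {a..t0}" for t
      using max[of t] that t0 unfolding u_def by simp
  qed (use ab t0 in auto)
  also have "\<dots> \<le> u t0 * (1/2)"
  proof (rule mult_left_mono)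
    have "integral {a..t0} ?k \<le> integral {a..b} ?k"
    proof (rule integral_subset_le[OF _ _ k_int])
      show "?k integrable_on {a..t0}" using integrable_subinterval_real[OF k_int] t0 by simp
    qed (use t0 in auto)
    then show "integral {a..t0} ?k \<le> 1/2" using small by linarith
  qed (simp add: u_def)
  finally have "u t0 \<le> 0" by simp
  then have "u t \<le> 0" using max[OF t] by linarith
  then show ?thesis unfolding u_def by (smt (verit) norm_ge_zero norm_eq_zero)
qed

lemma sl_solution_zero_initial:
  assumes qa: "q absolutely_integrable_on {0..pi}" and sol: "sl_solution q lam z w"
    and z0: "z 0 = 0" and w0: "w 0 = 0" and x: "x \<in> {0..pi}"
  shows "z x = 0 \<and> w x = 0"
proof -
  let ?k = "\<lambda>t. 1 + \<bar>q t\<bar> + norm lam"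
  have qi: "(\<lambda>t. \<bar>q t\<bar>) integrable_on {0..pi}"
    using qa unfolding absolutely_integrable_on_def by simp
  then have k_int: "?k integrable_on {0..pi}" by (intro integrable_add integrable_const_ivl)
  have "uniformly_continuous_on {0..pi} (\<lambda>x. integral {0..x} ?k)"
    by (intro compact_uniformly_continuous indefinite_integral_continuous_1 k_int compact_Icc)
  then obtain d where d: "d > 0" and dP: "\<And>a b. a \<in> {0..pi} \<Longrightarrow> b \<in> {0..pi} \<Longrightarrow> dist b a < d \<Longrightarrow>
      dist (integral {0..b} ?k) (integral {0..a} ?k) < 1/2"
    unfolding uniformly_continuous_on_def by (metis half_gt_zero zero_less_one)
  have small: "integral {a..b} ?k \<le> 1/2" if ab: "0 \<le> a" "a \<le> b" "b \<le> pi" "b - a < d" for a b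
  proof -
    have "integral {0..a} ?k + integral {a..b} ?k = integral {0..b} ?k"
      using integrable_subinterval_real[OF k_int, of 0 b] ab
      by (intro Henstock_Kurzweil_Integration.integral_combine) auto
    moreover have "dist (integral {0..b} ?k) (integral {0..a} ?k) < 1/2"
      using dP[of a b] ab by (simp add: dist_real_def)
    ultimately show ?thesis unfolding dist_real_def by linarith
  qed
  have grid: "\<forall>t\<in>{0..pi}. t \<le> real n * (d/2) \<longrightarrow> z t = 0 \<and> w t = 0" for n
  proof (induction n)
    case 0
    then show ?case using z0 w0 by auto
  next
    case (Suc n)
    define a where "a = min (real n * (d/2)) pi"
    define b where "b = min (real (Suc n) * (d/2)) pi"
    have ab: "0 \<le> a" "a \<le> b" "b \<le> pi" "b - a < d"
      unfolding a_def b_def using d pi_gt_zero by (auto simp: min_def algebra_simps)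
    have "z a = 0 \<and> w a = 0" using Suc.IH ab unfolding a_def by auto
    then have "z t = 0 \<and> w t = 0" if "t \<in> {a..b}" for t
      using sl_solution_zero_propagates[OF sol qi ab(1-3) _ _ small[OF ab] that] by simp
    then show ?case using Suc.IH unfolding a_def b_def by (auto simp: min_def)
  qed
  obtain n where "x \<le> real n * (d/2)"
    using real_arch_simple[of "x / (d/2)"] d by (auto simp: field_simps)
  then show ?thesis using grid x by blast
qed

lemma is_eigenvalue_imp_deriv_pi_eq_0:
  assumes qa: "q absolutely_integrable_on {0..pi}" and eig: "is_eigenvalue q lam"
    and sol: "sl_solution q lam S Sd" and S0: "S 0 = 0" and Sd0: "Sd 0 = 1"
  shows "Sd pi = 0"
proof -
  obtain y y' where y: "sl_solution q lam y y'" and y0: "y 0 = 0" and y'pi: "y' pi = 0"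
    and nz: "\<exists>x\<in>{0..pi}. y x \<noteq> 0"
    using eig unfolding is_eigenvalue_def by blast
  have y_eq: "y x = y' 0 * S x \<and> y' x = y' 0 * Sd x" if "x \<in> {0..pi}" for x
    using sl_solution_zero_initial[OF qa sl_solution_diff[OF y sol, of "y' 0"] _ _ that]
    by (simp add: y0 S0 Sd0)
  have "y' 0 \<noteq> 0" using nz y_eq by force
  moreover have "y' 0 * Sd pi = 0" using y_eq[of pi] y'pi by simp
  ultimately show ?thesis by simp
qed

lemma first_nsbf_coefficient_eq:
  fixes S :: "real \<Rightarrow> complex"
  assumes der: "(S has_vector_derivative d) (at x within {0..pi})" and x: "x \<in> {0<..pi}"
  shows "(let s0 = (\<lambda>t. 3 * (S t / complex_of_real t - 1)) in
           s0 x / complex_of_real x + vector_derivative s0 (at x within {0<..pi}) - c)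
         = 3 * (d - 1) / complex_of_real x - c"
proof -
  have "x \<in> closure ({0<..pi} - {x})"
  proof -
    have "{0<..<x} \<subseteq> {0<..pi} - {x}" using x by auto
    then have "closure {0<..<x} \<subseteq> closure ({0<..pi} - {x})" by (rule closure_mono)
    then show ?thesis using x by (auto simp: closure_greaterThanLessThan)
  qed
  then have nontriv: "at x within {0<..pi} \<noteq> bot" by (simp add: at_within_eq_bot_iff)
  have "((\<lambda>t. 3 * (S t * complex_of_real (inverse t) - 1)) has_vector_derivative
      3 * ((S x * complex_of_real (- inverse (x^2)) + d * complex_of_real (inverse x)) - 0))
      (at x within {0<..pi})"
    using x
    by (intro has_vector_derivative_mult_right has_vector_derivative_diff has_vector_derivative_mult
        has_vector_derivative_within_subset[OF der] has_vector_derivative_of_real has_vector_derivative_const)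
      (auto intro!: derivative_eq_intros simp: power2_eq_square)
  then have "vector_derivative (\<lambda>t. 3 * (S t * complex_of_real (inverse t) - 1)) (at x within {0<..pi})
      = 3 * ((S x * complex_of_real (- inverse (x^2)) + d * complex_of_real (inverse x)) - 0)"
    by (rule vector_derivative_within[OF nontriv])
  moreover have "(\<lambda>t. 3 * (S t / complex_of_real t - 1)) = (\<lambda>t. 3 * (S t * complex_of_real (inverse t) - 1))"
    by (simp add: divide_inverse)
  ultimately show ?thesis using x by (simp add: Let_def field_simps power2_eq_square)
qed

lemma nsbf_series_at_root:
  fixes \<sigma> :: "nat \<Rightarrow> complex" and r x I :: real
  defines "g \<equiv> \<lambda>n. (-1)^n * \<sigma> n * sph_bessel_j (2*n+1) (complex_of_real r * complex_of_real x)"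
  assumes r: "r \<noteq> 0" and x: "x \<noteq> 0" and sums: "summable g"
    and root: "cos (complex_of_real r * complex_of_real x)
      + 1 / (2 * complex_of_real r) * complex_of_real I * sin (complex_of_real r * complex_of_real x)
      + 1 / complex_of_real r * suminf g = 0"
    and omega: "complex_of_real (1/2 * I) = - \<sigma> 0 / 3 - 1 / complex_of_real x"
  shows "(sph_bessel_j 1 (complex_of_real (r * x)) - complex_of_real (sin (r * x)) / 3) * \<sigma> 0
      + (\<Sum>n. (-1)^(n+1) * \<sigma> (n+1) * sph_bessel_j (2*(n+1)+1) (complex_of_real (r * x)))
      = complex_of_real (- r * cos (r * x) + sin (r * x) / x)"
proof -
  have arg: "complex_of_real r * complex_of_real x = complex_of_real (r * x)" by simp
  have trig: "cos (complex_of_real (r * x)) = complex_of_real (cos (r * x))"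
    "sin (complex_of_real (r * x)) = complex_of_real (sin (r * x))"
    by (simp_all flip: cos_of_real sin_of_real)
  have series: "suminf g = - complex_of_real r * complex_of_real (cos (r * x))
      - complex_of_real I / 2 * complex_of_real (sin (r * x))"
    using root r unfolding arg trig by (simp add: field_simps eq_neg_iff_add_eq_0 add.assoc)
  have tail: "(\<Sum>n. (-1)^(n+1) * \<sigma> (n+1) * sph_bessel_j (2*(n+1)+1) (complex_of_real (r * x)))
      = suminf g - \<sigma> 0 * sph_bessel_j 1 (complex_of_real (r * x))"
    using suminf_split_head[OF sums] unfolding g_def arg by (simp del: of_real_mult)
  have half_I: "complex_of_real I / 2 = - \<sigma> 0 / 3 - 1 / complex_of_real x"
    using omega by simp
  show ?thesis using x unfolding tail series half_I by (simp add: field_simps)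
qed

theorem mainTheorem3:
  fixes q :: "real \<Rightarrow> real"
    and S Sd :: "complex \<Rightarrow> real \<Rightarrow> complex"
    and \<sigma> :: "nat \<Rightarrow> real \<Rightarrow> complex"
  assumes q_L1: "q absolutely_integrable_on {0..pi}"
    and q_L2: "(\<lambda>t. (q t)^2) integrable_on {0..pi}"
    and eig0: "is_eigenvalue q 0"
    and S_sol: "\<And>\<rho>. sl_solution q (\<rho>^2) (S \<rho>) (Sd \<rho>)"
    and S_init: "\<And>\<rho>. S \<rho> 0 = 0" "\<And>\<rho>. Sd \<rho> 0 = 1"
    and \<sigma>0: "\<And>x. x \<in> {0<..pi} \<Longrightarrow>
       \<sigma> 0 x = (let s0 = (\<lambda>t. 3 * (S 0 t / complex_of_real t - 1)) in
                  s0 x / complex_of_real x + vector_derivative s0 (at x within {0<..pi})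
                  - 3/2 * complex_of_real (integral {0..x} q))"
    and NSBF: "\<And>\<rho> x. \<rho> \<noteq> 0 \<Longrightarrow> x \<in> {0<..pi} \<Longrightarrow>
       summable (\<lambda>n. (-1)^n * \<sigma> n x * sph_bessel_j (2*n+1) (\<rho> * complex_of_real x)) \<and>
       Sd \<rho> x = cos (\<rho> * complex_of_real x)
         + 1 / (2*\<rho>) * complex_of_real (integral {0..x} q) * sin (\<rho> * complex_of_real x)
         + 1 / \<rho> * (\<Sum>n. (-1)^n * \<sigma> n x * sph_bessel_j (2*n+1) (\<rho> * complex_of_real x))"
  shows "complex_of_real (1/2 * integral {0..pi} q) = - \<sigma> 0 pi / 3 - 1 / complex_of_real pi
    \<and> (\<forall>\<rho>k::real. \<rho>k > 0 \<longrightarrow> is_eigenvalue q (complex_of_real (\<rho>k^2)) \<longrightarrow>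
         (sph_bessel_j 1 (complex_of_real (\<rho>k * pi)) - complex_of_real (sin (\<rho>k * pi)) / 3) * \<sigma> 0 pi
         + (\<Sum>n. (-1)^(n+1) * \<sigma> (n+1) pi * sph_bessel_j (2*(n+1)+1) (complex_of_real (\<rho>k * pi)))
         = complex_of_real (- \<rho>k * cos (\<rho>k * pi) + sin (\<rho>k * pi) / pi))"
proof -
  define I where "I = integral {0..pi} q"
  have eig_deriv: "Sd (complex_of_real r) pi = 0" if "is_eigenvalue q (complex_of_real (r^2))" for r
  proof (rule is_eigenvalue_imp_deriv_pi_eq_0[OF q_L1 that])
    show "sl_solution q (complex_of_real (r^2)) (S (complex_of_real r)) (Sd (complex_of_real r))"
      using S_sol[of "complex_of_real r"] by simp
  qed (fact S_init)+
  have "(S 0 has_vector_derivative Sd 0 pi) (at pi within {0..pi})"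
    using S_sol[of 0] unfolding sl_solution_def by simp
  then have "\<sigma> 0 pi = 3 * (Sd 0 pi - 1) / complex_of_real pi - 3/2 * complex_of_real I"
    using \<sigma>0[of pi] first_nsbf_coefficient_eq unfolding I_def by simp
  also have "Sd 0 pi = 0" using eig_deriv[of 0] eig0 by simp
  finally have omega: "complex_of_real (1/2 * I) = - \<sigma> 0 pi / 3 - 1 / complex_of_real pi"
    by (simp add: field_simps eq_neg_iff_add_eq_0)
  moreover have "(sph_bessel_j 1 (complex_of_real (r * pi)) - complex_of_real (sin (r * pi)) / 3) * \<sigma> 0 pi
      + (\<Sum>n. (-1)^(n+1) * \<sigma> (n+1) pi * sph_bessel_j (2*(n+1)+1) (complex_of_real (r * pi)))
      = complex_of_real (- r * cos (r * pi) + sin (r * pi) / pi)"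
    if r: "r > 0" and eig: "is_eigenvalue q (complex_of_real (r^2))" for r
  proof (rule nsbf_series_at_root[where \<sigma> = "\<lambda>n. \<sigma> n pi", OF _ _ _ _ omega])
    show "r \<noteq> 0" "pi \<noteq> 0" using r by simp_all
  qed (use NSBF[of "complex_of_real r" pi] r eig_deriv[OF eig] in \<open>simp_all add: I_def\<close>)
  ultimately show ?thesis unfolding I_def by blast
qed

end
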